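(* For all integers $k\ge 2$ and $n\ge 1$, $$\mathrm{spt}k_d(n)+\mathrm{spt}(k-1)_d(n)=\mathrm{spt}(k-1)_d(n-k+1)+p_d(n-k+1).$$
   Context: For a partition $\pi$, $s(\pi)$ denotes its smallest part. For $j\ge1$, $\mathrm{Spt}j_d(n)$ is the set of partitions $\pi$ of $n$ in which the smallest part $s(\pi)$ occurs exactly $j$ times and all remaining parts (those larger than $s(\pi)$) are pairwise distinct; $\mathrm{spt}j_d(n)=|\mathrm{Spt}j_d(n)|$, with $\mathrm{spt}j_d(n)=0$ for $n\le 0$. $p_d(n)$ is the number of partitions of $n$ into distinct parts, with $p_d(0)=1$ and $p_d(n)=0$ for $n<0$. *)

theory Defs
  imports Main "HOL-Library.Multiset"
begin

definition is_partition :: "nat multiset \<Rightarrow> nat \<Rightarrow> bool" where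
  "is_partition \<pi> m \<longleftrightarrow> (\<forall>x\<in>#\<pi>. 0 < x) \<and> sum_mset \<pi> = m"

definition smallest_part :: "nat multiset \<Rightarrow> nat" where
  "smallest_part \<pi> = Min (set_mset \<pi>)"

definition Sptd_set :: "nat \<Rightarrow> int \<Rightarrow> nat multiset set" where
  "Sptd_set j n = {\<pi>. 0 < n \<and> is_partition \<pi> (nat n) \<and> \<pi> \<noteq> {#} \<and>
      count \<pi> (smallest_part \<pi>) = j \<and>
      (\<forall>x\<in>#\<pi>. smallest_part \<pi> < x \<longrightarrow> count \<pi> x = 1)}"

definition sptd :: "nat \<Rightarrow> int \<Rightarrow> nat" where
  "sptd j n = card (Sptd_set j n)"

definition pd :: "int \<Rightarrow> nat" where
  "pd n = (if n < 0 then 0 else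
     card {\<pi>. is_partition \<pi> (nat n) \<and> (\<forall>x\<in>#\<pi>. count \<pi> x = 1)})"

end

theory Submission
  imports Defs
begin

text \<open>An element of Spt j_d(n) is determined by its smallest part s and the set D of its
  other parts, subject to j s + sum(D) = n. Split both Spt k_d(n) and Spt (k-1)_d(n) according to
  whether s = 1. If s = 1, deleting k - 1 ones leaves a partition of n - k + 1 into distinct
  parts, which contains 1 in the first case and avoids it in the second. If s \<ge> 2, lowering
  k - 1 copies of s by one gives an element of Spt (k-1)_d(n - k + 1) with smallest part s - 1:
  in the first case the remaining copy of s becomes a distinct part, so s is a part, and in the
  second case s is not a part. Hence both sides count the same four classes.\<close>

text \<open>A pair (s, D) stands for the partition with j copies of the smallest part s
  and the distinct larger parts D.\<close>
definition spt_pairs :: "nat \<Rightarrow> int \<Rightarrow> (nat \<times> nat set) set" where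
  "spt_pairs j n = {(s, D). 0 < s \<and> finite D \<and> (\<forall>x\<in>D. s < x) \<and> int (j * s + \<Sum>D) = n}"

definition distinct_parts_sets :: "int \<Rightarrow> nat set set" where
  "distinct_parts_sets n = {D. finite D \<and> 0 \<notin> D \<and> int (\<Sum>D) = n}"

lemma sum_mset_mset_set: "finite A \<Longrightarrow> sum_mset (mset_set A) = \<Sum>A"
  using sum_unfold_sum_mset[of id A] by simp

lemma mset_set_set_mset_eq:
  "(\<And>x. x \<in># M \<Longrightarrow> count M x = 1) \<Longrightarrow> mset_set (set_mset M) = M"
  by (rule multiset_eqI) (metis count_mset_set(1,3) finite_set_mset not_in_iff)

lemma smallest_part_replicate_add_mset_set:
  assumes "j \<ge> 1" "finite D" "\<forall>x\<in>D. s < x"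
  shows "smallest_part (replicate_mset j s + mset_set D) = s"
  using assms unfolding smallest_part_def
  by (auto intro!: Min_eqI simp: less_imp_le)

lemma Sptd_set_decompose:
  assumes "\<pi> \<in> Sptd_set j n"
  shows "\<pi> = replicate_mset j (smallest_part \<pi>) + mset_set (set_mset \<pi> - {smallest_part \<pi>})"
proof (rule multiset_eqI)
  fix x
  have "x \<in># \<pi> \<Longrightarrow> smallest_part \<pi> \<le> x"
    unfolding smallest_part_def by simp
  then show "count \<pi> x = count (replicate_mset j (smallest_part \<pi>)
      + mset_set (set_mset \<pi> - {smallest_part \<pi>})) x"
    using assms by (auto simp: Sptd_set_def count_mset_set' not_in_iff)
qed

lemma bij_betw_spt_pairs_Sptd_set:
  assumes "j \<ge> 1"
  shows "bij_betw (\<lambda>(s, D). replicate_mset j s + mset_set D) (spt_pairs j n) (Sptd_set j n)"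
proof (rule bij_betw_byWitness[where f' = "\<lambda>\<pi>. (smallest_part \<pi>, set_mset \<pi> - {smallest_part \<pi>})"],
       goal_cases)
  case 1
  show ?case
    using assms by (auto simp: spt_pairs_def smallest_part_replicate_add_mset_set)
next
  case 2
  show ?case
    using Sptd_set_decompose by auto
next
  case 3
  show ?case
  proof clarify
    fix s D assume "(s, D) \<in> spt_pairs j n"
    then have s: "0 < s" "finite D" "\<forall>x\<in>D. s < x" "int (j * s + \<Sum>D) = n"
      by (auto simp: spt_pairs_def)
    have "0 < j * s + \<Sum>D"
      using assms s(1) by simp
    with s(4) have "0 < n" "nat n = j * s + \<Sum>D"
      by (metis of_nat_0_less_iff, metis nat_int)
    then show "replicate_mset j s + mset_set D \<in> Sptd_set j n"
      using assms s
      by (auto simp: Sptd_set_def is_partition_def smallest_part_replicate_add_mset_set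
          sum_mset_mset_set)
  qed
next
  case 4
  show ?case
  proof clarify
    fix \<pi> assume \<pi>: "\<pi> \<in> Sptd_set j n"
    let ?s = "smallest_part \<pi>" and ?D = "set_mset \<pi> - {smallest_part \<pi>}"
    have "?s \<in># \<pi>" "0 < n" and partition: "is_partition \<pi> (nat n)"
      using \<pi> by (auto simp: Sptd_set_def smallest_part_def)
    moreover have "sum_mset \<pi> = j * ?s + \<Sum>?D"
      by (subst Sptd_set_decompose[OF \<pi>]) (simp add: sum_mset_mset_set)
    then have "int (j * ?s + \<Sum>?D) = n"
      using partition \<open>0 < n\<close> unfolding is_partition_def int_eq_iff by simp
    moreover have "\<forall>x\<in>?D. ?s < x"
      by (auto simp: smallest_part_def order_le_neq_trans)
    ultimately show "(?s, ?D) \<in> spt_pairs j n"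
      using partition by (auto simp: spt_pairs_def is_partition_def simp del: of_nat_add)
  qed
qed

lemma sptd_eq_card_spt_pairs: "j \<ge> 1 \<Longrightarrow> sptd j n = card (spt_pairs j n)"
  unfolding sptd_def using bij_betw_spt_pairs_Sptd_set bij_betw_same_card by metis

lemma distinct_parts_multisets_eq_mset_set_image:
  "{\<pi>. is_partition \<pi> m \<and> (\<forall>x\<in>#\<pi>. count \<pi> x = 1)} = mset_set ` distinct_parts_sets (int m)"
proof (intro equalityI subsetI)
  fix \<pi> assume "\<pi> \<in> {\<pi>. is_partition \<pi> m \<and> (\<forall>x\<in>#\<pi>. count \<pi> x = 1)}"
  then have "\<pi> = mset_set (set_mset \<pi>)" "set_mset \<pi> \<in> distinct_parts_sets (int m)"
    using mset_set_set_mset_eq[of \<pi>] sum_mset_mset_set[of "set_mset \<pi>"]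
    by (auto simp: is_partition_def distinct_parts_sets_def)
  then show "\<pi> \<in> mset_set ` distinct_parts_sets (int m)" by blast
next
  fix \<pi> assume "\<pi> \<in> mset_set ` distinct_parts_sets (int m)"
  then obtain D where "\<pi> = mset_set D" "finite D" "0 \<notin> D" "\<Sum>D = m"
    unfolding distinct_parts_sets_def by (auto simp del: of_nat_sum)
  then show "\<pi> \<in> {\<pi>. is_partition \<pi> m \<and> (\<forall>x\<in>#\<pi>. count \<pi> x = 1)}"
    by (auto simp: is_partition_def sum_mset_mset_set intro: gr0I)
qed

lemma pd_eq_card_distinct_parts_sets: "pd n = card (distinct_parts_sets n)"
proof (cases "n < 0")
  case True
  then show ?thesis by (simp add: pd_def distinct_parts_sets_def del: of_nat_sum)
next
  case False
  then have "pd n = card (mset_set ` distinct_parts_sets n)"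
    unfolding pd_def distinct_parts_multisets_eq_mset_set_image by simp
  also have "\<dots> = card (distinct_parts_sets n)"
    by (rule card_image, rule inj_onI) (simp add: distinct_parts_sets_def)
  finally show ?thesis .
qed

lemma finite_sets_with_bounded_sum: "finite {D :: nat set. finite D \<and> \<Sum>D \<le> m}"
proof (rule finite_subset)
  show "{D :: nat set. finite D \<and> \<Sum>D \<le> m} \<subseteq> Pow {..m}"
    using member_le_sum[of _ _ "\<lambda>x. x"] by fastforce
qed simp

lemma finite_distinct_parts_sets: "finite (distinct_parts_sets n)"
  by (rule finite_subset[OF _ finite_sets_with_bounded_sum[of "nat n"]])
    (auto simp: distinct_parts_sets_def simp del: of_nat_sum)

lemma finite_spt_pairs:
  assumes "j \<ge> 1"
  shows "finite (spt_pairs j n)"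
proof (rule finite_subset)
  show "spt_pairs j n \<subseteq> {..nat n} \<times> {D. finite D \<and> \<Sum>D \<le> nat n}"
  proof (intro subrelI)
    fix s D assume "(s, D) \<in> spt_pairs j n"
    then have "int (j * s + \<Sum>D) = n" and "finite D"
      by (simp_all add: spt_pairs_def del: of_nat_add of_nat_mult of_nat_sum)
    then have "j * s + \<Sum>D = nat n"
      by (metis nat_int)
    moreover have "s \<le> j * s"
      using assms by simp
    ultimately have "s \<le> nat n" "\<Sum>D \<le> nat n"
      by linarith+
    with \<open>finite D\<close> show "(s, D) \<in> {..nat n} \<times> {D. finite D \<and> \<Sum>D \<le> nat n}"
      by simp
  qed
  show "finite ({..nat n} \<times> {D. finite D \<and> \<Sum>D \<le> nat n})"
    using finite_sets_with_bounded_sum by blast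
qed

lemma card_filter_add_filter_not:
  assumes "finite A"
  shows "card A = card {x \<in> A. P x} + card {x \<in> A. \<not> P x}"
proof -
  have "A = {x \<in> A. P x} \<union> {x \<in> A. \<not> P x}"
    by blast
  then show ?thesis
    using assms card_Un_disjoint[of "{x \<in> A. P x}" "{x \<in> A. \<not> P x}"] by auto
qed

lemma bij_betw_spt_pairs_Suc_lower_smallest:
  "bij_betw (\<lambda>(s, D). (s - 1, insert s D))
     {a \<in> spt_pairs (Suc j) n. fst a \<noteq> 1} {b \<in> spt_pairs j (n - int j). Suc (fst b) \<in> snd b}"
proof (rule bij_betw_byWitness[where f' = "\<lambda>(t, E). (Suc t, E - {Suc t})"], goal_cases)
  case 1
  show ?case by (auto simp: spt_pairs_def)
next
  case 2
  show ?case by (auto simp: spt_pairs_def insert_absorb)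
next
  case 3
  show ?case
    by (auto simp: spt_pairs_def algebra_simps of_nat_diff)
next
  case 4
  show ?case
    by (auto simp: spt_pairs_def algebra_simps sum.remove)
qed

lemma bij_betw_spt_pairs_Suc_drop_ones:
  "bij_betw (\<lambda>(s, D). insert 1 D)
     {a \<in> spt_pairs (Suc j) n. fst a = 1} {E \<in> distinct_parts_sets (n - int j). 1 \<in> E}"
proof (rule bij_betw_byWitness[where f' = "\<lambda>E. (1, E - {1})"], goal_cases)
  case 1
  show ?case by (auto simp: spt_pairs_def)
next
  case 2
  show ?case by (auto simp: distinct_parts_sets_def insert_absorb)
next
  case 3
  show ?case
    by (auto simp: spt_pairs_def distinct_parts_sets_def algebra_simps)
next
  case 4
  show ?case
    by (auto simp: spt_pairs_def distinct_parts_sets_def algebra_simps sum.remove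
        intro: Suc_lessI gr0I)
qed

lemma bij_betw_spt_pairs_lower_smallest:
  "bij_betw (\<lambda>(s, D). (s - 1, D))
     {a \<in> spt_pairs j n. fst a \<noteq> 1} {b \<in> spt_pairs j (n - int j). Suc (fst b) \<notin> snd b}"
proof (rule bij_betw_byWitness[where f' = "\<lambda>(t, E). (Suc t, E)"], goal_cases)
  case 1
  show ?case by (auto simp: spt_pairs_def)
next
  case 2
  show ?case by (auto simp: spt_pairs_def)
next
  case 3
  show ?case
    by (auto simp: spt_pairs_def algebra_simps of_nat_diff)
next
  case 4
  show ?case
    by (auto simp: spt_pairs_def algebra_simps intro: Suc_lessI)
qed

lemma bij_betw_spt_pairs_drop_ones:
  "bij_betw snd {a \<in> spt_pairs j n. fst a = 1} {E \<in> distinct_parts_sets (n - int j). 1 \<notin> E}"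
proof (rule bij_betw_byWitness[where f' = "\<lambda>E. (1, E)"], goal_cases)
  case 1
  show ?case by auto
next
  case 2
  show ?case by auto
next
  case 3
  show ?case
    by (auto simp: spt_pairs_def distinct_parts_sets_def)
next
  case 4
  show ?case
    by (auto simp: spt_pairs_def distinct_parts_sets_def intro: Suc_lessI gr0I)
qed

theorem theorem1p1:
  fixes k :: nat and n :: int
  assumes "k \<ge> 2" and "n \<ge> 1"
  shows "sptd k n + sptd (k - 1) n = sptd (k - 1) (n - int k + 1) + pd (n - int k + 1)"
proof -
  obtain j where k: "k = Suc j" and j: "j \<ge> 1"
    using assms(1) by (cases k) auto
  define m where "m = n - int j"
  have "sptd k n + sptd (k - 1) n = card (spt_pairs (Suc j) n) + card (spt_pairs j n)"
    using k j sptd_eq_card_spt_pairs by simp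
  also have "\<dots> = (card {a \<in> spt_pairs (Suc j) n. fst a \<noteq> 1} + card {a \<in> spt_pairs (Suc j) n. fst a = 1})
      + (card {a \<in> spt_pairs j n. fst a \<noteq> 1} + card {a \<in> spt_pairs j n. fst a = 1})"
    using card_filter_add_filter_not[OF finite_spt_pairs, of _ _ "\<lambda>a. fst a \<noteq> 1"] j by simp
  also have "\<dots> = (card {b \<in> spt_pairs j m. Suc (fst b) \<in> snd b} + card {E \<in> distinct_parts_sets m. 1 \<in> E})
      + (card {b \<in> spt_pairs j m. Suc (fst b) \<notin> snd b} + card {E \<in> distinct_parts_sets m. 1 \<notin> E})"
    unfolding m_def
    using bij_betw_same_card[OF bij_betw_spt_pairs_Suc_lower_smallest]
      bij_betw_same_card[OF bij_betw_spt_pairs_Suc_drop_ones]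
      bij_betw_same_card[OF bij_betw_spt_pairs_lower_smallest]
      bij_betw_same_card[OF bij_betw_spt_pairs_drop_ones]
    by simp
  also have "\<dots> = card (spt_pairs j m) + card (distinct_parts_sets m)"
    using card_filter_add_filter_not[OF finite_spt_pairs[OF j], of m "\<lambda>b. Suc (fst b) \<in> snd b"]
      card_filter_add_filter_not[OF finite_distinct_parts_sets, of m "\<lambda>E. 1 \<in> E"]
    by simp
  also have "\<dots> = sptd (k - 1) (n - int k + 1) + pd (n - int k + 1)"
    using k j by (simp add: m_def sptd_eq_card_spt_pairs pd_eq_card_distinct_parts_sets)
  finally show ?thesis .
qed

end
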